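(* For every positive integer $n$, the number of pseudo-symmetric gapsets in $\mathcal{G}_{2n+1}(3n+2)$ is $2^{n-1}$.
   Context: A gapset is a finite set $G\subset\mathbb{N}=\{1,2,\dots\}$ such that whenever $z\in G$ and $z=x+y$ with $x,y\in\mathbb{N}$, then $x\in G$ or $y\in G$; its genus is $g=\#G$. Writing $G=\{\ell_1<\dots<\ell_g\}$, the Frobenius number is $F(G)=\ell_g$; $G$ is pseudo-symmetric if $F(G)=2g-2$. $G$ is pure $\kappa$-sparse if $\ell_{i+1}-\ell_i\le\kappa$ for all $i$ with equality for some $i$; $\mathcal{G}_\kappa(g)$ is the set of pure $\kappa$-sparse gapsets of genus $g$. *)

theory Defs
  imports Main
begin

definition gapset :: "nat set \<Rightarrow> bool" where
  "gapset G \<longleftrightarrow> finite G \<and> 0 \<notin> G \<and>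
     (\<forall>z\<in>G. \<forall>x y. 0 < x \<and> 0 < y \<and> z = x + y \<longrightarrow> x \<in> G \<or> y \<in> G)"

text \<open>Genus = card G. Frobenius number = largest gap.\<close>
definition frobenius :: "nat set \<Rightarrow> nat" where
  "frobenius G = Max G"

definition pseudo_symmetric :: "nat set \<Rightarrow> bool" where
  "pseudo_symmetric G \<longleftrightarrow> int (frobenius G) = 2 * int (card G) - 2"

definition pure_sparse :: "nat \<Rightarrow> nat set \<Rightarrow> bool" where
  "pure_sparse \<kappa> G \<longleftrightarrow>
     (let L = sorted_list_of_set G in
       (\<forall>i. Suc i < length L \<longrightarrow> L ! Suc i - L ! i \<le> \<kappa>) \<and>
       (\<exists>i. Suc i < length L \<and> L ! Suc i - L ! i = \<kappa>))"

definition pure_sparse_gapsets :: "nat \<Rightarrow> nat \<Rightarrow> nat set set" where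
  "pure_sparse_gapsets \<kappa> g = {G. gapset G \<and> card G = g \<and> pure_sparse \<kappa> G}"

end

theory Submission
  imports Defs
begin

text \<open>A pseudo-symmetric gapset G of genus g has Frobenius number F = 2(g - 1); counting the
  pairs {x, F - x} with 0 < x < g - 1 shows that it contains g - 1 and F and exactly one
  element of each pair. For a pure (2n + 1)-sparse one of genus 3n + 2 we have F = 6n + 2;
  its gap of length 2n + 1 puts 1, ..., 2n into G, hence 4n + 2, ..., 6n + 1 out of G, so the
  element preceding F is 4n + 1 and 2n + 1 is not in G. What remains free is the trace of G on
  {2n + 2..3n}, and every one of its 2^(n - 1) values gives such a gapset.\<close>

section \<open>Pure sparseness via consecutive elements\<close>

definition consecutive :: "'a::linorder set \<Rightarrow> 'a \<Rightarrow> 'a \<Rightarrow> bool" where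
  "consecutive G a b \<longleftrightarrow> a \<in> G \<and> b \<in> G \<and> a < b \<and> (\<forall>x\<in>G. \<not> (a < x \<and> x < b))"

lemma consecutive_sorted_list_of_set_nth:
  assumes "finite G" "Suc i < length (sorted_list_of_set G)"
  shows "consecutive G (sorted_list_of_set G ! i) (sorted_list_of_set G ! Suc i)"
proof -
  let ?L = "sorted_list_of_set G"
  have sorted: "sorted_wrt (<) ?L" by simp
  have set_L: "set ?L = G" using assms(1) by simp
  have mem: "?L ! i \<in> G" "?L ! Suc i \<in> G"
    using assms set_L nth_mem by (metis Suc_lessD)+
  have less: "?L ! i < ?L ! Suc i"
    using sorted_wrt_nth_less[OF sorted, of i "Suc i"] assms by simp
  have "\<not> (?L ! i < x \<and> x < ?L ! Suc i)" if "x \<in> G" for x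
  proof
    assume between: "?L ! i < x \<and> x < ?L ! Suc i"
    from that set_L obtain j where j: "j < length ?L" "?L ! j = x"
      by (metis in_set_conv_nth)
    have "?L ! j \<le> ?L ! i" if "j \<le> i"
      using sorted_wrt_nth_less[OF sorted, of j i] assms that by (cases "j = i") auto
    moreover have "?L ! Suc i \<le> ?L ! j" if "Suc i \<le> j"
      using sorted_wrt_nth_less[OF sorted, of "Suc i" j] j that by (cases "j = Suc i") auto
    ultimately show False using between j leD by (metis not_less_eq_eq)
  qed
  then show ?thesis unfolding consecutive_def using mem less by blast
qed

lemma consecutive_imp_sorted_list_of_set_nth:
  assumes "finite G" "consecutive G a b"
  shows "\<exists>i. Suc i < length (sorted_list_of_set G) \<and>
    sorted_list_of_set G ! i = a \<and> sorted_list_of_set G ! Suc i = b"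
proof -
  let ?L = "sorted_list_of_set G"
  have sorted: "sorted_wrt (<) ?L" by simp
  have set_L: "set ?L = G" using assms(1) by simp
  from assms(2) have "a \<in> G" "b \<in> G" "a < b" and no_between: "\<forall>x\<in>G. \<not> (a < x \<and> x < b)"
    unfolding consecutive_def by auto
  then obtain i j where i: "i < length ?L" "?L ! i = a" and j: "j < length ?L" "?L ! j = b"
    using set_L by (metis in_set_conv_nth)
  have "i < j"
  proof (rule ccontr)
    assume "\<not> i < j"
    then have "?L ! j \<le> ?L ! i"
      using sorted_wrt_nth_less[OF sorted, of j i] i by (cases "j = i") auto
    with i j \<open>a < b\<close> show False by simp
  qed
  then have Suc_i: "Suc i < length ?L" using j by simp
  have "?L ! Suc i \<in> G" using Suc_i set_L nth_mem by metis
  moreover have "a < ?L ! Suc i"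
    using sorted_wrt_nth_less[OF sorted, of i "Suc i"] Suc_i i by simp
  moreover have "?L ! Suc i \<le> b"
    using sorted_wrt_nth_less[OF sorted, of "Suc i" j] j \<open>i < j\<close> by (cases "j = Suc i") auto
  ultimately have "?L ! Suc i = b" using no_between by force
  with Suc_i i show ?thesis by blast
qed

lemma pure_sparse_iff_consecutive:
  assumes "finite G"
  shows "pure_sparse \<kappa> G \<longleftrightarrow>
    (\<forall>a b. consecutive G a b \<longrightarrow> b - a \<le> \<kappa>) \<and> (\<exists>a b. consecutive G a b \<and> b - a = \<kappa>)"
  unfolding pure_sparse_def Let_def
  using consecutive_sorted_list_of_set_nth[OF assms] consecutive_imp_sorted_list_of_set_nth[OF assms]
  by metis

lemma consecutive_Max_below:
  assumes "finite G" "a \<in> G" "b \<in> G" "a < b"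
  shows "consecutive G (Max {x \<in> G. x < b}) b"
proof -
  let ?S = "{x \<in> G. x < b}"
  have "finite ?S" "?S \<noteq> {}" using assms by auto
  then have "Max ?S \<in> ?S" and le_Max: "\<And>x. x \<in> ?S \<Longrightarrow> x \<le> Max ?S"
    using Max_in Max_ge by blast+
  moreover have "\<not> (Max ?S < x \<and> x < b)" if "x \<in> G" for x
  proof
    assume "Max ?S < x \<and> x < b"
    moreover from this have "x \<le> Max ?S" using le_Max that by simp
    ultimately show False by (simp add: leD)
  qed
  ultimately show ?thesis unfolding consecutive_def using assms(3) by blast
qed

lemma pure_sparse_close_predecessor:
  assumes "finite G" "pure_sparse \<kappa> G" "a \<in> G" "b \<in> G" "a < b"
  obtains p where "p \<in> G" "p < b" "b - p \<le> \<kappa>"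
proof -
  let ?p = "Max {x \<in> G. x < b}"
  have "consecutive G ?p b" using consecutive_Max_below[OF assms(1,3-5)] .
  then have "?p \<in> G" "?p < b" "b - ?p \<le> \<kappa>"
    using assms(2) unfolding pure_sparse_iff_consecutive[OF assms(1)] consecutive_def by auto
  then show ?thesis using that by blast
qed

section \<open>Sets complementary around a centre\<close>

definition complementary_around :: "nat \<Rightarrow> nat set \<Rightarrow> bool" where
  "complementary_around m G \<longleftrightarrow> G \<subseteq> {1..2*m} \<and> m \<in> G \<and> 2*m \<in> G \<and>
     (\<forall>x. 0 < x \<and> x < m \<longrightarrow> (x \<in> G \<longleftrightarrow> 2*m - x \<notin> G))"

lemma card_Int_doubleton:
  "a \<noteq> b \<Longrightarrow> card (G \<inter> {a, b}) = of_bool (a \<in> G) + of_bool (b \<in> G)"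
  by (cases "a \<in> G"; cases "b \<in> G") auto

lemma sum_eq_card_imp_eq_1:
  fixes f :: "'a \<Rightarrow> nat"
  assumes "finite A" "\<And>x. x \<in> A \<Longrightarrow> 1 \<le> f x" "sum f A = card A" "x \<in> A"
  shows "f x = 1"
proof (rule ccontr)
  assume "f x \<noteq> 1"
  with assms(2,4) have "1 < f x" by fastforce
  then have "sum (\<lambda>_. 1) A < sum f A"
    by (intro sum_strict_mono_ex1) (use assms in auto)
  then show False using assms(3) by simp
qed

lemma card_eq_sum_reflected_pairs:
  fixes G :: "nat set"
  assumes "G \<subseteq> {1..2*m}"
  shows "card G = card (G \<inter> {m, 2*m}) + (\<Sum>x\<in>{1..<m}. card (G \<inter> {x, 2*m - x}))"
proof -
  have split: "G = (G \<inter> {m, 2*m}) \<union> (\<Union>x\<in>{1..<m}. G \<inter> {x, 2*m - x})"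
  proof (intro equalityI subsetI)
    fix y assume "y \<in> G"
    then have "1 \<le> y" "y \<le> 2*m" using assms by auto
    then consider "y = m \<or> y = 2*m" | "y < m" | "m < y \<and> y < 2*m" by linarith
    then show "y \<in> (G \<inter> {m, 2*m}) \<union> (\<Union>x\<in>{1..<m}. G \<inter> {x, 2*m - x})"
    proof cases
      case 3
      then have "2*m - y \<in> {1..<m}" "y = 2*m - (2*m - y)" by auto
      with \<open>y \<in> G\<close> show ?thesis by blast
    qed (use \<open>y \<in> G\<close> \<open>1 \<le> y\<close> in auto)
  qed auto
  have pairs_disjoint: "(G \<inter> {x, 2*m - x}) \<inter> (G \<inter> {y, 2*m - y}) = {}"
    if "x \<in> {1..<m}" "y \<in> {1..<m}" "x \<noteq> y" for x y
    using that by auto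
  have "card G = card (G \<inter> {m, 2*m}) + card (\<Union>x\<in>{1..<m}. G \<inter> {x, 2*m - x})"
    by (subst split, rule card_Un_disjoint) auto
  also have "card (\<Union>x\<in>{1..<m}. G \<inter> {x, 2*m - x}) = (\<Sum>x\<in>{1..<m}. card (G \<inter> {x, 2*m - x}))"
    by (rule card_UN_disjoint) (use pairs_disjoint in auto)
  finally show ?thesis .
qed

lemma complementary_around_mem_iff:
  assumes "complementary_around m G" "0 < x" "x < 2*m" "x \<noteq> m"
  shows "x \<in> G \<longleftrightarrow> 2*m - x \<notin> G"
proof (cases "x < m")
  case False
  then have "0 < 2*m - x" "2*m - x < m" "2*m - (2*m - x) = x" using assms by auto
  then show ?thesis using assms(1) unfolding complementary_around_def by metis
qed (use assms in \<open>auto simp: complementary_around_def\<close>)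

lemma card_complementary_around:
  assumes "complementary_around m G"
  shows "card G = m + 1"
proof -
  have sub: "G \<subseteq> {1..2*m}" and "m \<in> G" "2*m \<in> G"
    using assms unfolding complementary_around_def by auto
  then have "0 < m" by auto
  have "card (G \<inter> {x, 2*m - x}) = 1" if "x \<in> {1..<m}" for x
    using that complementary_around_mem_iff[OF assms, of x] by (auto simp: card_Int_doubleton)
  then have "(\<Sum>x\<in>{1..<m}. card (G \<inter> {x, 2*m - x})) = m - 1" by simp
  moreover have "card (G \<inter> {m, 2*m}) = 2"
    using \<open>m \<in> G\<close> \<open>2*m \<in> G\<close> \<open>0 < m\<close> by (auto simp: card_Int_doubleton)
  ultimately show ?thesis using card_eq_sum_reflected_pairs[OF sub] \<open>0 < m\<close> by simp
qed

lemma Max_complementary_around: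
  assumes "complementary_around m G"
  shows "Max G = 2*m"
proof (rule Max_eqI)
  show "finite G" using assms finite_subset unfolding complementary_around_def by blast
qed (use assms in \<open>auto simp: complementary_around_def\<close>)

lemma complementary_around_eqI:
  assumes G: "complementary_around m G" and H: "complementary_around m H"
    and agree: "\<And>x. 0 < x \<Longrightarrow> x < m \<Longrightarrow> x \<in> G \<longleftrightarrow> x \<in> H"
  shows "G = H"
proof (rule set_eqI)
  fix x
  have facts: "G \<subseteq> {1..2*m}" "H \<subseteq> {1..2*m}" "m \<in> G" "m \<in> H" "2*m \<in> G" "2*m \<in> H"
    using G H unfolding complementary_around_def by auto
  consider "x = 0 \<or> 2*m < x" | "x = m \<or> x = 2*m" | "0 < x \<and> x < m" | "m < x \<and> x < 2*m"
    by linarith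
  then show "x \<in> G \<longleftrightarrow> x \<in> H"
  proof cases
    case 4
    then have "0 < 2*m - x" "2*m - x < m" by auto
    then show ?thesis using 4 agree[of "2*m - x"]
        complementary_around_mem_iff[OF G, of x] complementary_around_mem_iff[OF H, of x] by auto
  qed (use agree facts in auto)
qed

section \<open>Gapsets\<close>

text \<open>A sum of two non-members exceeds 2k + 1, so it can only be the top element 2m,
  where complementarity applies.\<close>
lemma gapset_if_complementary_around:
  assumes compl: "complementary_around m G"
    and initial: "\<And>x. 0 < x \<Longrightarrow> x \<le> k \<Longrightarrow> x \<in> G"
    and below_top: "\<And>z. z \<in> G \<Longrightarrow> z \<noteq> 2*m \<Longrightarrow> z \<le> 2*k + 1"
  shows "gapset G"
  unfolding gapset_def
proof (intro conjI ballI allI impI)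
  have "G \<subseteq> {1..2*m}" and "m \<in> G" using compl unfolding complementary_around_def by auto
  then show "finite G" "0 \<notin> G" using finite_subset by auto
  fix z x y assume "z \<in> G" and z: "0 < x \<and> 0 < y \<and> z = x + y"
  show "x \<in> G \<or> y \<in> G"
  proof (rule ccontr)
    assume "\<not> (x \<in> G \<or> y \<in> G)"
    then have "x \<notin> G" "y \<notin> G" by auto
    then have "k < x" "k < y" using initial[of x] initial[of y] z by (meson not_le)+
    then have "2*k + 2 \<le> z" using z by linarith
    then have "z = 2*m" using below_top[OF \<open>z \<in> G\<close>] by (cases "z = 2*m") auto
    then have "y = 2*m - x" "x < 2*m" using z by auto
    moreover have "x \<noteq> m" using \<open>x \<notin> G\<close> \<open>m \<in> G\<close> by auto
    ultimately show False
      using complementary_around_mem_iff[OF compl, of x] z \<open>x \<notin> G\<close> \<open>y \<notin> G\<close> by simp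
  qed
qed

lemma gapset_frobenius_minus_mem:
  assumes "gapset G" "G \<noteq> {}" "0 < x" "x < frobenius G" "x \<notin> G"
  shows "frobenius G - x \<in> G"
proof -
  have "frobenius G \<in> G" using assms(1,2) Max_in unfolding gapset_def frobenius_def by blast
  moreover have "frobenius G = x + (frobenius G - x)" "0 < frobenius G - x" using assms(4) by auto
  ultimately show ?thesis using assms(1,3,5) unfolding gapset_def by blast
qed

lemma gapset_mem_below_consecutive_diff:
  assumes "gapset G" "consecutive G a b" "0 < x" "x < b - a"
  shows "x \<in> G"
proof -
  have "b \<in> G" "b - x \<notin> G" "0 < b - x" "b = x + (b - x)"
    using assms(2-4) unfolding consecutive_def by auto
  then show ?thesis using assms(1,3) unfolding gapset_def by blast
qed

lemma pure_sparse_gapset_initial_segment: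
  assumes "gapset G" "pure_sparse \<kappa> G" "0 < x" "x < \<kappa>"
  shows "x \<in> G"
proof -
  have "finite G" using assms(1) unfolding gapset_def by simp
  then obtain a b where "consecutive G a b" "b - a = \<kappa>"
    using assms(2) pure_sparse_iff_consecutive by blast
  then show ?thesis using gapset_mem_below_consecutive_diff[OF assms(1)] assms(3,4) by simp
qed

lemma pseudo_symmetric_gapset_complementary_around:
  assumes "gapset G" "pseudo_symmetric G"
  shows "complementary_around (card G - 1) G"
proof -
  have fin: "finite G" and "0 \<notin> G" using assms(1) unfolding gapset_def by auto
  have "G \<noteq> {}" using assms(2) unfolding pseudo_symmetric_def by auto
  then have top: "frobenius G \<in> G" using fin Max_in unfolding frobenius_def by blast
  define m where "m = card G - 1"
  have "0 < card G" using fin \<open>G \<noteq> {}\<close> by (simp add: card_gt_0_iff)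
  then have card: "card G = m + 1" unfolding m_def by simp
  have frob: "frobenius G = 2*m"
    using assms(2) card unfolding pseudo_symmetric_def by simp
  have sub: "G \<subseteq> {1..2*m}"
    using fin \<open>0 \<notin> G\<close> Max_ge frob unfolding frobenius_def by (fastforce simp: Suc_le_eq)
  have "0 < m" using top frob \<open>0 \<notin> G\<close> by (cases m) auto
  have complement: "2*m - x \<in> G" if "0 < x" "x < 2*m" "x \<notin> G" for x
    using gapset_frobenius_minus_mem[OF assms(1) \<open>G \<noteq> {}\<close>, of x] that frob by simp
  have centre: "m \<in> G" using complement[of m] \<open>0 < m\<close> by auto
  let ?pairs = "\<lambda>x. card (G \<inter> {x, 2*m - x})"
  have pair_ge: "1 \<le> ?pairs x" if "x \<in> {1..<m}" for x
    using that complement[of x] by (auto simp: card_Int_doubleton)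
  have "card G = 2 + sum ?pairs {1..<m}"
    using card_eq_sum_reflected_pairs[OF sub] centre top frob \<open>0 < m\<close>
    by (simp add: card_Int_doubleton)
  then have "sum ?pairs {1..<m} = card {1..<m}" using card \<open>0 < m\<close> by simp
  then have pair_eq: "?pairs x = 1" if "x \<in> {1..<m}" for x
    using sum_eq_card_imp_eq_1[of "{1..<m}" ?pairs] pair_ge that by blast
  have "x \<in> G \<longleftrightarrow> 2*m - x \<notin> G" if "0 < x" "x < m" for x
  proof -
    have "of_bool (x \<in> G) + of_bool (2*m - x \<in> G) = (1::nat)"
      using pair_eq[of x] card_Int_doubleton[of x "2*m - x" G] that by simp
    then show ?thesis by (cases "x \<in> G"; cases "2*m - x \<in> G") auto
  qed
  moreover have "2*m \<in> G" using top frob by simp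
  ultimately show ?thesis
    unfolding complementary_around_def m_def[symmetric] using sub centre by blast
qed

definition window :: "nat \<Rightarrow> nat set" where
  "window n = {2*n+2..3*n}"

text \<open>The part in {3n + 2..4n + 1} is the reflection about 3n + 1 of {2n + 1..3n} - B.\<close>
definition gapset_of_window :: "nat \<Rightarrow> nat set \<Rightarrow> nat set" where
  "gapset_of_window n B =
     {1..2*n} \<union> B \<union> {3*n+1} \<union> {x \<in> {3*n+2..4*n+1}. 6*n+2 - x \<notin> B} \<union> {6*n+2}"

lemma mem_gapset_of_window:
  "x \<in> gapset_of_window n B \<longleftrightarrow>
     (1 \<le> x \<and> x \<le> 2*n) \<or> x \<in> B \<or> x = 3*n+1 \<or>
     (3*n+2 \<le> x \<and> x \<le> 4*n+1 \<and> 6*n+2 - x \<notin> B) \<or> x = 6*n+2"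
  unfolding gapset_of_window_def by auto

lemma gapset_of_window_Int_window:
  "B \<subseteq> window n \<Longrightarrow> gapset_of_window n B \<inter> window n = B"
  unfolding window_def by (auto simp: mem_gapset_of_window)

lemma complementary_around_gapset_of_window:
  assumes "B \<subseteq> window n"
  shows "complementary_around (3*n+1) (gapset_of_window n B)"
proof -
  have B: "2*n+2 \<le> x" "x \<le> 3*n" if "x \<in> B" for x
    using assms that unfolding window_def by auto
  have "x \<in> gapset_of_window n B \<longleftrightarrow> 6*n+2 - x \<notin> gapset_of_window n B"
    if "0 < x" "x < 3*n+1" for x
    using that B[of x] B[of "6*n+2 - x"] by (auto simp: mem_gapset_of_window)
  moreover have "gapset_of_window n B \<subseteq> {1..6*n+2}"
    using B by (fastforce simp: mem_gapset_of_window)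
  moreover have "3*n+1 \<in> gapset_of_window n B" "6*n+2 \<in> gapset_of_window n B"
    by (simp_all add: mem_gapset_of_window)
  moreover have "2*(3*n+1) = 6*n+2" by simp
  ultimately show ?thesis
    unfolding complementary_around_def by metis
qed

lemma pure_sparse_gapset_of_window:
  assumes "B \<subseteq> window n"
  shows "pure_sparse (2*n+1) (gapset_of_window n B)"
proof -
  let ?G = "gapset_of_window n B"
  have compl: "complementary_around (3*n+1) ?G"
    using complementary_around_gapset_of_window[OF assms] .
  then have "finite ?G" using finite_subset unfolding complementary_around_def by blast
  have B: "\<forall>x\<in>B. 2*n+2 \<le> x \<and> x \<le> 3*n" using assms unfolding window_def by auto
  then have "4*n+1 \<in> ?G" by (force simp: mem_gapset_of_window)
  have gap_le: "b - a \<le> 2*n+1" if "consecutive ?G a b" for a b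
  proof -
    have "a \<in> ?G" "b \<in> ?G" and next_le: "\<And>c. c \<in> ?G \<Longrightarrow> a < c \<Longrightarrow> b \<le> c"
      using that unfolding consecutive_def by force+
    then have "1 \<le> a" "b \<le> 6*n+2"
      using compl unfolding complementary_around_def by auto
    consider "a < 2*n" | "2*n \<le> a \<and> a < 3*n+1" | "3*n+1 \<le> a \<and> a < 4*n+1" | "4*n+1 \<le> a"
      by linarith
    then show ?thesis
    proof cases
      case 1 then show ?thesis using next_le[of "a+1"] \<open>1 \<le> a\<close> by (simp add: mem_gapset_of_window)
    next
      case 2
      then have "b \<le> 3*n+1" using next_le[of "3*n+1"] by (simp add: mem_gapset_of_window)
      with 2 show ?thesis by linarith
    next
      case 3
      then have "b \<le> 4*n+1" using next_le[of "4*n+1"] \<open>4*n+1 \<in> ?G\<close> by simp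
      with 3 show ?thesis by linarith
    qed (use \<open>b \<le> 6*n+2\<close> in simp)
  qed
  have "consecutive ?G (4*n+1) (6*n+2)"
    unfolding consecutive_def using B \<open>4*n+1 \<in> ?G\<close> by (fastforce simp: mem_gapset_of_window)
  then show ?thesis
    unfolding pure_sparse_iff_consecutive[OF \<open>finite ?G\<close>] using gap_le by force
qed

lemma gapset_of_window_in_pure_sparse_gapsets:
  assumes "B \<subseteq> window n"
  shows "gapset_of_window n B \<in> pure_sparse_gapsets (2*n+1) (3*n+2)"
proof -
  let ?G = "gapset_of_window n B"
  have compl: "complementary_around (3*n+1) ?G"
    using complementary_around_gapset_of_window[OF assms] .
  have "gapset ?G"
  proof (rule gapset_if_complementary_around[OF compl, of "2*n"])
    show "z \<le> 2*(2*n) + 1" if "z \<in> ?G" "z \<noteq> 2*(3*n+1)" for z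
      using that assms by (auto simp: mem_gapset_of_window window_def)
  qed (simp add: mem_gapset_of_window)
  then show ?thesis
    unfolding pure_sparse_gapsets_def
    using card_complementary_around[OF compl] pure_sparse_gapset_of_window[OF assms] by simp
qed

lemma pseudo_symmetric_gapset_of_window:
  assumes "B \<subseteq> window n"
  shows "pseudo_symmetric (gapset_of_window n B)"
  using complementary_around_gapset_of_window[OF assms]
  unfolding pseudo_symmetric_def frobenius_def
  by (simp add: Max_complementary_around card_complementary_around)

lemma gapset_of_window_Int_window_eq:
  assumes "n \<ge> 1" "G \<in> pure_sparse_gapsets (2*n+1) (3*n+2)" "pseudo_symmetric G"
  shows "gapset_of_window n (G \<inter> window n) = G"
proof -
  from assms(2) have gap: "gapset G" and sparse: "pure_sparse (2*n+1) G" and "card G = 3*n+2"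
    unfolding pure_sparse_gapsets_def by auto
  have fin: "finite G" using gap unfolding gapset_def by simp
  have compl: "complementary_around (3*n+1) G"
    using pseudo_symmetric_gapset_complementary_around[OF gap assms(3)] \<open>card G = 3*n+2\<close> by simp
  have mem_iff: "x \<in> G \<longleftrightarrow> 6*n+2 - x \<notin> G" if "0 < x" "x < 6*n+2" "x \<noteq> 3*n+1" for x
    using complementary_around_mem_iff[OF compl, of x] that by simp
  have "3*n+1 \<in> G" "6*n+2 \<in> G"
    using compl unfolding complementary_around_def by auto
  have initial: "x \<in> G" if "0 < x" "x \<le> 2*n" for x
    using pure_sparse_gapset_initial_segment[OF gap sparse] that by simp
  have "4*n+1 \<in> G"
  proof -
    obtain p where p: "p \<in> G" "p < 6*n+2" "6*n+2 - p \<le> 2*n+1"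
      using pure_sparse_close_predecessor[OF fin sparse \<open>3*n+1 \<in> G\<close> \<open>6*n+2 \<in> G\<close>] by auto
    show ?thesis
    proof (rule ccontr)
      assume "4*n+1 \<notin> G"
      then have "4*n+1 < p" using p by (cases "p = 4*n+1") auto
      then have "6*n+2 - p \<in> G" using initial p(2) by simp
      moreover have "6*n+2 - p \<notin> G" using mem_iff[of p] p \<open>4*n+1 < p\<close> by simp
      ultimately show False by simp
    qed
  qed
  show ?thesis
  proof (rule complementary_around_eqI[OF complementary_around_gapset_of_window compl])
    fix x assume "0 < x" "x < 3*n+1"
    then consider "x \<le> 2*n" | "x = 2*n+1" | "x \<in> window n"
      unfolding window_def atLeastAtMost_iff by linarith
    then show "x \<in> gapset_of_window n (G \<inter> window n) \<longleftrightarrow> x \<in> G"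
    proof cases
      case 1 then show ?thesis using initial \<open>0 < x\<close> by (simp add: mem_gapset_of_window)
    next
      case 2 then show ?thesis
        using mem_iff[of x] \<open>4*n+1 \<in> G\<close> assms(1) by (auto simp: mem_gapset_of_window window_def)
    next
      case 3 then show ?thesis by (auto simp: mem_gapset_of_window window_def)
    qed
  qed simp
qed

theorem mainTheorem5:
  fixes n :: nat
  assumes "n \<ge> 1"
  shows "card {G \<in> pure_sparse_gapsets (2*n+1) (3*n+2). pseudo_symmetric G} = 2 ^ (n - 1)"
proof -
  have "{G \<in> pure_sparse_gapsets (2*n+1) (3*n+2). pseudo_symmetric G} =
      gapset_of_window n ` Pow (window n)"
  proof (intro equalityI subsetI)
    fix G assume "G \<in> {G \<in> pure_sparse_gapsets (2*n+1) (3*n+2). pseudo_symmetric G}"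
    then have "G = gapset_of_window n (G \<inter> window n)"
      using gapset_of_window_Int_window_eq[OF assms] by simp
    then show "G \<in> gapset_of_window n ` Pow (window n)" by blast
  qed (use gapset_of_window_in_pure_sparse_gapsets pseudo_symmetric_gapset_of_window in auto)
  moreover have "inj_on (gapset_of_window n) (Pow (window n))"
    by (rule inj_onI) (metis PowD gapset_of_window_Int_window)
  ultimately have "card {G \<in> pure_sparse_gapsets (2*n+1) (3*n+2). pseudo_symmetric G} =
      card (Pow (window n))"
    by (simp add: card_image)
  also have "\<dots> = 2 ^ (n - 1)" by (simp add: card_Pow window_def)
  finally show ?thesis .
qed

end
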